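(* Let $0\le m\le n\le l$ with $n\ge1$, and let $([m],v,e),([n],w,f)$ be graphs with attributes in $\mathcal X,\mathcal Y$. Extend $([n],w,f)$ to $([l],w,f)$ by $w_i=x'_*$, $f_{ii}=y_0$ for $n+1\le i\le l$ and $f_{ii'}=y'_*$ whenever $\max\{i,i'\}\ge n+1$, $i\ne i'$. Then, computing GOSPA1 in the extended spaces $\mathcal X\cup\{x_*,x'_*\}$, $\mathcal Y\cup\{y_*,y'_*\}$ with the same $p$, $C_1$ and $C_{\mathcal Y}$, $$d_{\mathbb G,R_1}(([m],v,e),([n],w,f))\le d_{\mathbb G,R_1}(([m],v,e),([l],w,f)).$$
   Context: $(\mathcal X,d_{\mathcal X})$, $(\mathcal Y,d_{\mathcal Y})$ are pseudometric spaces with $\mathrm{diam}(\mathcal X)\le C_{\mathcal X}$, $\mathrm{diam}(\mathcal Y)\le C_{\mathcal Y}$, $y_0\in\mathcal Y$ a distinguished "no edge" element, $p\ge1$, $C_1^p\ge C_{\mathcal X}^p+\frac12C_{\mathcal Y}^p$. New points $x_*,x'_*$ are adjoined to $\mathcal X$ with $d_{\mathcal X}(x_*,x)^p=d_{\mathcal X}(x'_*,x)^p=d_{\mathcal X}(x_*,x'_* )^p=C_1^p-\frac12C_{\mathcal Y}^p$ for all $x\in\mathcal X$ (symmetric, zero self-distances), and $y_*,y'_*$ to $\mathcal Y$ with $d_{\mathcal Y}(y_*,y)=d_{\mathcal Y}(y'_*,y)=d_{\mathcal Y}(y_*,y'_* )=C_{\mathcal Y}$ for $y\in\mathcal Y$.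 A graph $([n],v,e)$ has vertex map $v$ into the (extended) vertex space and symmetric edge map $e$ into the (extended) edge space with $e_{ii}=y_0$; $S_n$ is the set of permutations of $[n]=\{1,\dots,n\}$. GOSPA1 distance (order $p$, penalty $C_1$): for graphs with $n\ge\max\{m,1\}$, with $0/0:=0$, $$d_{\mathbb G,R_1}(([m],v,e),([n],w,f))=n^{-1/p}\min_{\pi\in S_n}\Big[(n-m)C_1^p+\sum_{i\in[m]}d_{\mathcal X}(v_i,w_{\pi(i)})^p+\frac{1}{2(n-1)}\sum_{i\in[m]}\Big(\sum_{i'\in[m]}d_{\mathcal Y}(e_{ii'},f_{\pi(i)\pi(i')})^p+(n-m)C_{\mathcal Y}^p\Big)\Big]^{1/p}.$$ *)

theory Defs
  imports Complex_Main "HOL-Combinatorics.Permutations"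
begin

definition pseudometric :: "('a \<Rightarrow> 'a \<Rightarrow> real) \<Rightarrow> bool" where
  "pseudometric d \<longleftrightarrow> (\<forall>x. d x x = 0) \<and> (\<forall>x y. d x y = d y x) \<and>
     (\<forall>x y z. d x z \<le> d x y + d y z)"

text \<open>Extension of a space by two new points \<open>Star\<close> (x_*) and \<open>Star'\<close> (x'_*).\<close>
datatype 'a ext = Orig 'a | Star | Star'

fun ext_dist :: "('a \<Rightarrow> 'a \<Rightarrow> real) \<Rightarrow> real \<Rightarrow> 'a ext \<Rightarrow> 'a ext \<Rightarrow> real" where
  "ext_dist d c (Orig x) (Orig y) = d x y"
| "ext_dist d c a b = (if a = b then 0 else c)"

text \<open>Graph \<open>([n],v,e)\<close>: vertex map v, symmetric edge map e with e_ii = y0.\<close>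
definition is_graph :: "'y \<Rightarrow> nat \<Rightarrow> (nat \<Rightarrow> nat \<Rightarrow> 'y) \<Rightarrow> bool" where
  "is_graph y0 n e \<longleftrightarrow> (\<forall>i\<in>{1..n}. e i i = y0) \<and>
     (\<forall>i\<in>{1..n}. \<forall>i'\<in>{1..n}. e i i' = e i' i)"

definition gospa1_cost ::
  "('x \<Rightarrow> 'x \<Rightarrow> real) \<Rightarrow> ('y \<Rightarrow> 'y \<Rightarrow> real) \<Rightarrow> real \<Rightarrow> real \<Rightarrow> real \<Rightarrow>
   nat \<Rightarrow> (nat \<Rightarrow> 'x) \<Rightarrow> (nat \<Rightarrow> nat \<Rightarrow> 'y) \<Rightarrow>
   nat \<Rightarrow> (nat \<Rightarrow> 'x) \<Rightarrow> (nat \<Rightarrow> nat \<Rightarrow> 'y) \<Rightarrow> (nat \<Rightarrow> nat) \<Rightarrow> real" where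
  "gospa1_cost dX dY p C1 CY m v e n w f \<pi> =
     real (n - m) * C1 powr p
     + (\<Sum>i\<in>{1..m}. dX (v i) (w (\<pi> i)) powr p)
     + (\<Sum>i\<in>{1..m}. (\<Sum>i'\<in>{1..m}. dY (e i i') (f (\<pi> i) (\<pi> i')) powr p)
                      + real (n - m) * CY powr p) / (2 * (real n - 1))"

text \<open>GOSPA1 distance (for n \<ge> max m 1). Division by zero (n = 1) yields 0 in HOL,
  matching the convention 0/0 := 0.\<close>
definition gospa1 ::
  "('x \<Rightarrow> 'x \<Rightarrow> real) \<Rightarrow> ('y \<Rightarrow> 'y \<Rightarrow> real) \<Rightarrow> real \<Rightarrow> real \<Rightarrow> real \<Rightarrow>
   nat \<Rightarrow> (nat \<Rightarrow> 'x) \<Rightarrow> (nat \<Rightarrow> nat \<Rightarrow> 'y) \<Rightarrow>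
   nat \<Rightarrow> (nat \<Rightarrow> 'x) \<Rightarrow> (nat \<Rightarrow> nat \<Rightarrow> 'y) \<Rightarrow> real" where
  "gospa1 dX dY p C1 CY m v e n w f =
     real n powr (- 1 / p) *
     (Min {gospa1_cost dX dY p C1 CY m v e n w f \<pi> | \<pi>. \<pi> permutes {1..n}}) powr (1 / p)"

definition ext_vertices :: "nat \<Rightarrow> (nat \<Rightarrow> 'x) \<Rightarrow> nat \<Rightarrow> 'x ext" where
  "ext_vertices n w i = (if i \<le> n then Orig (w i) else Star')"

definition ext_edges :: "'y \<Rightarrow> nat \<Rightarrow> (nat \<Rightarrow> nat \<Rightarrow> 'y) \<Rightarrow> nat \<Rightarrow> nat \<Rightarrow> 'y ext" where
  "ext_edges y0 n f i i' =
     (if i \<le> n \<and> i' \<le> n then Orig (f i i') else if i = i' then Orig y0 else Star')"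

end

theory Submission
  imports Defs
begin

text \<open>Take an optimal assignment \<pi> of the m vertices into the padded graph on l vertices
  and turn it into an assignment \<sigma> into the original graph on n vertices that keeps \<pi>
  wherever \<pi> hits an original vertex and otherwise uses a free original vertex. The padding
  vertices and edges sit at the maximal distances, so every vertex and edge term of \<sigma> is at
  most the corresponding term of \<pi>. With R and Q the vertex and edge sums of \<pi>, both costs are
  then explicit functions of the number k of vertices, and cost(k) / k is nondecreasing in k
  as long as R and Q obey their trivial bounds R \<le> m (C1^p - CY^p / 2) and
  Q \<le> m (m - 1) CY^p.\<close>

lemma inj_on_extends_to_permutation:
  fixes g :: "'a \<Rightarrow> 'a"
  assumes "finite N" "K \<subseteq> N" "inj_on g K" "g ` K \<subseteq> N"
  obtains \<sigma> where "\<sigma> permutes N" "\<And>i. i \<in> K \<Longrightarrow> \<sigma> i = g i"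
proof -
  have "card (N - K) = card (N - g ` K)"
    using assms by (simp add: card_Diff_subset card_image finite_subset)
  then obtain h where h: "bij_betw h (N - K) (N - g ` K)"
    using assms(1) finite_same_card_bij by blast
  define \<sigma> where "\<sigma> i = (if i \<in> K then g i else if i \<in> N then h i else i)" for i
  have "bij_betw \<sigma> K (g ` K)"
    using assms(3) unfolding \<sigma>_def bij_betw_def inj_on_def by auto
  moreover have "bij_betw \<sigma> (N - K) (N - g ` K)"
    using h unfolding \<sigma>_def by (rule bij_betw_cong[THEN iffD1, rotated]) auto
  ultimately have "bij_betw \<sigma> (K \<union> (N - K)) (g ` K \<union> (N - g ` K))"
    by (rule bij_betw_combine) auto
  with assms have "bij_betw \<sigma> N N"
    by (simp add: Un_absorb1)
  then have "\<sigma> permutes N"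
    by (rule bij_imp_permutes) (use assms(2) in \<open>auto simp: \<sigma>_def\<close>)
  then show thesis
    using that by (simp add: \<sigma>_def)
qed

lemma exists_permutes_agreeing:
  fixes \<pi> :: "'a \<Rightarrow> 'a"
  assumes "finite N" "K \<subseteq> N" "inj_on \<pi> K"
  obtains \<sigma> where "\<sigma> permutes N" "\<And>i. i \<in> K \<Longrightarrow> \<pi> i \<in> N \<Longrightarrow> \<sigma> i = \<pi> i"
proof -
  define S where "S = {i \<in> K. \<pi> i \<in> N}"
  define T where "T = N - \<pi> ` S"
  have fin: "finite K" "finite S" "finite (K - S)"
    using finite_subset[OF assms(2,1)] unfolding S_def by auto
  have inj_S: "inj_on \<pi> S"
    using assms(3) by (rule inj_on_subset) (auto simp: S_def)
  have \<pi>_S: "\<pi> ` S \<subseteq> N"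
    unfolding S_def by auto
  have "card (K - S) = card K - card S"
    using fin by (simp add: card_Diff_subset S_def)
  also have "\<dots> \<le> card N - card S"
    using assms card_mono diff_le_mono by blast
  also have "\<dots> = card T"
    unfolding T_def using fin \<pi>_S inj_S by (simp add: card_Diff_subset card_image)
  finally obtain k where k: "inj_on k (K - S)" "k ` (K - S) \<subseteq> T"
    using card_le_inj[of "K - S" T] fin assms(1) unfolding T_def by auto
  define g where "g i = (if i \<in> S then \<pi> i else k i)" for i
  have g_in_S: "g x \<in> \<pi> ` S \<longleftrightarrow> x \<in> S" if "x \<in> K" for x
    using that k(2) unfolding g_def T_def by auto
  have "inj_on g K"
  proof (rule inj_onI)
    fix i j assume ij: "i \<in> K" "j \<in> K" "g i = g j"
    then have "i \<in> S \<longleftrightarrow> j \<in> S"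
      using g_in_S by metis
    then show "i = j"
      using ij k(1) inj_S unfolding g_def inj_on_def by (metis Diff_iff)
  qed
  moreover have "g ` K \<subseteq> N"
    using k \<pi>_S unfolding g_def T_def by auto
  ultimately obtain \<sigma> where "\<sigma> permutes N" "\<And>i. i \<in> K \<Longrightarrow> \<sigma> i = g i"
    using inj_on_extends_to_permutation assms by metis
  then show thesis
    using that unfolding g_def S_def by auto
qed

lemma permutes_interval_agreeing:
  fixes \<pi> :: "nat \<Rightarrow> nat"
  assumes "\<pi> permutes {1..l}" "m \<le> n" "n \<le> l"
  obtains \<sigma> where "\<sigma> permutes {1..n}" "\<And>i. i \<in> {1..m} \<Longrightarrow> \<pi> i \<le> n \<Longrightarrow> \<sigma> i = \<pi> i"
proof -
  obtain \<sigma> where \<sigma>: "\<sigma> permutes {1..n}" "\<And>i. i \<in> {1..m} \<Longrightarrow> \<pi> i \<in> {1..n} \<Longrightarrow> \<sigma> i = \<pi> i"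
    by (rule exists_permutes_agreeing[of "{1..n}" "{1..m}" \<pi>])
      (use assms(2) permutes_inj_on[OF assms(1)] in auto)
  moreover have "\<pi> i \<in> {1..l}" if "i \<in> {1..m}" for i
    using permutes_in_image[OF assms(1)] that assms(2,3) by auto
  ultimately show thesis
    using that by auto
qed

text \<open>The GOSPA1 cost of an assignment into a graph with k vertices, in terms of
  C = C1^p, E = CY^p and the vertex and edge sums R and Q of the assignment.\<close>

definition cost_of_sums :: "nat \<Rightarrow> nat \<Rightarrow> real \<Rightarrow> real \<Rightarrow> real \<Rightarrow> real \<Rightarrow> real" where
  "cost_of_sums m k C E R Q =
     real (k - m) * C + R + (Q + real m * real (k - m) * E) / (2 * (real k - 1))"

lemma gospa1_cost_eq_cost_of_sums:
  "gospa1_cost dX dY p C1 CY m v e n w f \<pi> =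
     cost_of_sums m n (C1 powr p) (CY powr p)
       (\<Sum>i\<in>{1..m}. dX (v i) (w (\<pi> i)) powr p)
       (\<Sum>i\<in>{1..m}. \<Sum>i'\<in>{1..m}. dY (e i i') (f (\<pi> i) (\<pi> i')) powr p)"
  by (simp add: gospa1_cost_def cost_of_sums_def sum.distrib)

lemma cost_of_sums_mono:
  assumes "1 \<le> k" "R' \<le> R" "Q' \<le> Q"
  shows "cost_of_sums m k C E R' Q' \<le> cost_of_sums m k C E R Q"
proof -
  have "(Q' + real m * real (k - m) * E) / (2 * (real k - 1))
      \<le> (Q + real m * real (k - m) * E) / (2 * (real k - 1))"
    using assms by (intro divide_right_mono) auto
  then show ?thesis
    using assms(2) by (simp add: cost_of_sums_def)
qed

lemma cost_of_sums_scaled_le_one: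
  assumes "m \<le> 1" "1 \<le> l" "0 \<le> R" "R \<le> m * (C - E / 2)" "Q \<le> m * (real m - 1) * E" "0 \<le> Q"
    "0 \<le> E"
  shows "real l * cost_of_sums m 1 C E R Q \<le> cost_of_sums m l C E R Q"
proof (cases "m = 0")
  case True
  then show ?thesis
    using assms by (simp add: cost_of_sums_def of_nat_diff)
next
  case False
  then have m: "m = 1"
    using assms(1) by simp
  then have Q: "Q = 0"
    using assms(5,6) by simp
  have one: "cost_of_sums m 1 C E R Q = R"
    using m by (simp add: cost_of_sums_def)
  show ?thesis
  proof (cases "l = 1")
    case True
    then show ?thesis using one by simp
  next
    case False
    have "real l * R = R + (real l - 1) * R"
      by algebra
    also have "\<dots> \<le> R + (real l - 1) * (C - E / 2)"
      using assms(2,4) m by (simp add: mult_left_mono)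
    also have "\<dots> \<le> (real l - 1) * C + R + E / 2"
      using assms(2,7) by (simp add: field_simps)
    also have "\<dots> = cost_of_sums m l C E R Q"
      using False assms(2) m Q by (simp add: cost_of_sums_def of_nat_diff field_simps)
    finally show ?thesis
      using one by simp
  qed
qed

lemma cost_of_sums_scaled_le_ge_two:
  assumes "m \<le> n" "n \<le> l" "2 \<le> n" "R \<le> m * (C - E / 2)" "Q \<le> m * (real m - 1) * E" "0 \<le> Q"
    "0 \<le> E"
  shows "real l * cost_of_sums m n C E R Q \<le> real n * cost_of_sums m l C E R Q"
proof -
  define a where "a = real n - 1"
  define b where "b = real l - 1"
  have a: "0 < a" and b: "a \<le> b"
    using assms(2,3) unfolding a_def b_def by auto
  \<comment> \<open>The bounds on R and Q give G \<ge> m E (a b + a + b + 1 - (a + 1) (b + 1)) = 0.\<close>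
  define G where
    "G = 2 * a * b * (m * C - R) - Q * (a + b + 1) + m * E * (m * (a + b + 1) - (a + 1) * (b + 1))"
  have "2 * a * b * (m * E / 2) \<le> 2 * a * b * (m * C - R)"
    using assms(4) a b by (intro mult_left_mono) (auto simp: algebra_simps)
  moreover have "Q * (a + b + 1) \<le> (m * (real m - 1) * E) * (a + b + 1)"
    using assms(5) a b by (intro mult_right_mono) auto
  ultimately have "0 \<le> G"
    unfolding G_def by (simp add: algebra_simps)
  moreover have "real n * cost_of_sums m l C E R Q - real l * cost_of_sums m n C E R Q
      = (b - a) * G / (2 * a * b)"
  proof -
    have "real n = a + 1" "real l = b + 1"
      unfolding a_def b_def by simp_all
    then show ?thesis
      using assms(1,2) a b unfolding G_def cost_of_sums_def
      by (simp add: of_nat_diff field_simps)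
  qed
  moreover have "0 \<le> (b - a) * G / (2 * a * b)"
    using \<open>0 \<le> G\<close> a b by (intro divide_nonneg_nonneg mult_nonneg_nonneg) auto
  ultimately show ?thesis
    by linarith
qed

lemma cost_of_sums_scaled_le:
  assumes "m \<le> n" "n \<le> l" "1 \<le> n" "0 \<le> R" "R \<le> m * (C - E / 2)"
    "0 \<le> Q" "Q \<le> m * (real m - 1) * E" "0 \<le> E"
  shows "real l * cost_of_sums m n C E R Q \<le> real n * cost_of_sums m l C E R Q"
proof (cases "n = 1")
  case True
  then show ?thesis
    using assms cost_of_sums_scaled_le_one[of m l R C E Q] by simp
next
  case False
  then show ?thesis
    using assms by (intro cost_of_sums_scaled_le_ge_two) auto
qed

lemma sum_off_diagonal_const:
  assumes "finite A" "i \<in> A"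
  shows "(\<Sum>j\<in>A. if i = j then 0 else x) = (real (card A) - 1) * x"
proof -
  have "(\<Sum>j\<in>A. if i = j then 0 else x) = (\<Sum>j\<in>A - {i}. if i = j then 0 else x)"
    using assms by (simp add: sum.remove)
  also have "\<dots> = (\<Sum>j\<in>A - {i}. x)"
    by (intro sum.cong) auto
  moreover have "1 \<le> card A"
    using assms by (auto simp: Suc_le_eq card_gt_0_iff)
  ultimately show ?thesis
    using assms by (simp add: of_nat_diff algebra_simps)
qed

lemma gospa1_cost_nonneg:
  "1 \<le> n \<Longrightarrow> 0 \<le> gospa1_cost dX dY p C1 CY m v e n w f \<pi>"
  unfolding gospa1_cost_def
  by (intro add_nonneg_nonneg mult_nonneg_nonneg sum_nonneg divide_nonneg_nonneg) auto

lemma finite_costs_permutes: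
  "finite S \<Longrightarrow> finite {F \<pi> | \<pi>. \<pi> permutes S}"
  unfolding setcompr_eq_image by (intro finite_imageI finite_permutations)

lemma of_nat_powr_minus_mult_powr:
  assumes "0 \<le> A"
  shows "real k powr (- 1 / p) * A powr (1 / p) = (A / real k) powr (1 / p)"
proof -
  have "real k powr (- 1 / p) = inverse (real k powr (1 / p))"
    by (simp add: powr_minus[symmetric])
  moreover have "(A / real k) powr (1 / p) = A powr (1 / p) / real k powr (1 / p)"
    using assms by (simp add: powr_divide)
  ultimately show ?thesis
    by (simp add: divide_inverse)
qed

lemma gospa1_le_gospa1I:
  assumes "1 \<le> n" "n \<le> l" "0 < p"
    and dominated: "\<And>\<pi>. \<pi> permutes {1..l} \<Longrightarrow> \<exists>\<sigma>. \<sigma> permutes {1..n} \<and>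
      real l * gospa1_cost dX dY p C1 CY m v e n w f \<sigma>
        \<le> real n * gospa1_cost dX dY p C1 CY m' v' e' l w' f' \<pi>"
  shows "gospa1 dX dY p C1 CY m v e n w f \<le> gospa1 dX dY p C1 CY m' v' e' l w' f'"
proof -
  define A where "A = Min {gospa1_cost dX dY p C1 CY m v e n w f \<sigma> | \<sigma>. \<sigma> permutes {1..n}}"
  define B where "B = Min {gospa1_cost dX dY p C1 CY m' v' e' l w' f' \<pi> | \<pi>. \<pi> permutes {1..l}}"
  have "B \<in> {gospa1_cost dX dY p C1 CY m' v' e' l w' f' \<pi> | \<pi>. \<pi> permutes {1..l}}"
    unfolding B_def by (intro Min_in finite_costs_permutes) (auto intro!: exI[of _ id] permutes_id)
  then obtain \<pi> where "\<pi> permutes {1..l}" and B: "B = gospa1_cost dX dY p C1 CY m' v' e' l w' f' \<pi>"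
    by blast
  then obtain \<sigma> where "\<sigma> permutes {1..n}"
    and \<sigma>: "real l * gospa1_cost dX dY p C1 CY m v e n w f \<sigma> \<le> real n * B"
    using dominated by blast
  then have "A \<le> gospa1_cost dX dY p C1 CY m v e n w f \<sigma>"
    unfolding A_def by (intro Min_le finite_costs_permutes) auto
  then have "real l * A \<le> real n * B"
    using \<sigma> by (meson mult_left_mono of_nat_0_le_iff order_trans)
  then have "A / real n \<le> B / real l"
    using assms(1,2) by (simp add: field_simps mult.commute)
  moreover have "A \<in> {gospa1_cost dX dY p C1 CY m v e n w f \<sigma> | \<sigma>. \<sigma> permutes {1..n}}"
    unfolding A_def by (intro Min_in finite_costs_permutes) (auto intro!: exI[of _ id] permutes_id)
  then have "0 \<le> A"
    using gospa1_cost_nonneg[OF assms(1)] by auto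
  ultimately have "(A / real n) powr (1 / p) \<le> (B / real l) powr (1 / p)"
    using assms by (intro powr_mono2) auto
  moreover have "0 \<le> B"
    unfolding B using assms(1,2) by (intro gospa1_cost_nonneg) simp
  ultimately show ?thesis
    unfolding gospa1_def A_def[symmetric] B_def[symmetric]
    by (simp only: of_nat_powr_minus_mult_powr \<open>0 \<le> A\<close>)
qed

lemma pseudometric_nonneg:
  assumes "pseudometric d"
  shows "0 \<le> d x y"
proof -
  have "d x x \<le> d x y + d y x"
    using assms unfolding pseudometric_def by blast
  then show ?thesis
    using assms unfolding pseudometric_def by simp
qed

lemma ext_dist_nonneg:
  "pseudometric d \<Longrightarrow> 0 \<le> c \<Longrightarrow> 0 \<le> ext_dist d c a b"
  by (cases a; cases b) (auto simp: pseudometric_nonneg)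

lemma ext_dist_Orig_le:
  "\<forall>x y. d x y \<le> c \<Longrightarrow> ext_dist d c (Orig a) b \<le> c"
  by (cases b) auto

text \<open>Here c is the distance from an original vertex to a padding vertex.\<close>

locale gospa1_padding =
  fixes dX :: "'x \<Rightarrow> 'x \<Rightarrow> real" and dY :: "'y \<Rightarrow> 'y \<Rightarrow> real"
    and c CY C1 p :: real and y0 :: 'y and m n l :: nat
    and v w :: "nat \<Rightarrow> 'x" and e f :: "nat \<Rightarrow> nat \<Rightarrow> 'y"
  assumes pseudometric_X: "pseudometric dX" and pseudometric_Y: "pseudometric dY"
    and dX_le: "\<forall>x x'. dX x x' \<le> c" and dY_le: "\<forall>y y'. dY y y' \<le> CY"
    and p_pos: "0 < p" and penalty: "c powr p + CY powr p / 2 \<le> C1 powr p"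
    and sizes: "m \<le> n" "n \<le> l" "1 \<le> n"
    and graph_e: "is_graph y0 m e" and graph_f: "is_graph y0 n f"
begin

lemma c_nonneg: "0 \<le> c"
  using order_trans[OF pseudometric_nonneg[OF pseudometric_X] dX_le[rule_format]] .

lemma CY_nonneg: "0 \<le> CY"
  using order_trans[OF pseudometric_nonneg[OF pseudometric_Y] dY_le[rule_format]] .

lemma vertex_dist_le:
  assumes "j \<le> n \<Longrightarrow> j' = j"
  shows "ext_dist dX c (Orig a) (Orig (w j')) \<le> ext_dist dX c (Orig a) (ext_vertices n w j)"
proof (cases "j \<le> n")
  case True
  then show ?thesis
    using assms by (simp add: ext_vertices_def)
next
  case False
  then show ?thesis
    using dX_le by (simp add: ext_vertices_def)
qed

context
  fixes \<pi> \<sigma> :: "nat \<Rightarrow> nat"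
  assumes \<pi>: "\<pi> permutes {1..l}" and \<sigma>: "\<sigma> permutes {1..n}"
    and agree: "\<And>i. i \<in> {1..m} \<Longrightarrow> \<pi> i \<le> n \<Longrightarrow> \<sigma> i = \<pi> i"
begin

lemma edge_dist_le:
  assumes i: "i \<in> {1..m}" "i' \<in> {1..m}"
  shows "ext_dist dY CY (Orig (e i i')) (Orig (f (\<sigma> i) (\<sigma> i')))
      \<le> ext_dist dY CY (Orig (e i i')) (ext_edges y0 n f (\<pi> i) (\<pi> i'))"
proof (cases "\<pi> i \<le> n \<and> \<pi> i' \<le> n")
  case True
  then show ?thesis
    using agree i by (simp add: ext_edges_def)
next
  case outside: False
  show ?thesis
  proof (cases "i = i'")
    case True
    have "\<sigma> i \<in> {1..n}"
      using i sizes(1) permutes_in_image[OF \<sigma>] by auto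
    then have "dY (e i i') (f (\<sigma> i) (\<sigma> i')) = 0"
      using True i graph_e graph_f pseudometric_Y
      by (simp add: is_graph_def pseudometric_def)
    then show ?thesis
      using ext_dist_nonneg[OF pseudometric_Y CY_nonneg] by simp
  next
    case False
    then have "\<pi> i \<noteq> \<pi> i'"
      using permutes_inj[OF \<pi>] by (auto dest: injD)
    then have "ext_edges y0 n f (\<pi> i) (\<pi> i') = Star'"
      using outside by (simp add: ext_edges_def)
    then show ?thesis
      using dY_le by simp
  qed
qed

lemma ext_edge_dist_le:
  assumes i: "i \<in> {1..m}" "i' \<in> {1..m}"
  shows "ext_dist dY CY (Orig (e i i')) (ext_edges y0 n f (\<pi> i) (\<pi> i'))
      \<le> (if i = i' then 0 else CY)"
proof (cases "i = i'")
  case True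
  have "\<pi> i \<in> {1..l}"
    using permutes_in_image[OF \<pi>] i sizes by auto
  then have "\<pi> i \<le> n \<Longrightarrow> f (\<pi> i) (\<pi> i) = y0"
    using graph_f by (simp add: is_graph_def)
  then have "ext_edges y0 n f (\<pi> i) (\<pi> i') = Orig y0"
    using True by (simp add: ext_edges_def)
  then show ?thesis
    using True i graph_e pseudometric_Y by (simp add: is_graph_def pseudometric_def)
next
  case False
  then show ?thesis
    using ext_dist_Orig_le[OF dY_le] by simp
qed

lemma vertex_sum_le:
  "(\<Sum>i\<in>{1..m}. ext_dist dX c (Orig (v i)) (ext_vertices n w (\<pi> i)) powr p)
    \<le> m * (C1 powr p - CY powr p / 2)"
proof -
  have "(\<Sum>i\<in>{1..m}. ext_dist dX c (Orig (v i)) (ext_vertices n w (\<pi> i)) powr p)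
      \<le> (\<Sum>i\<in>{1..m}. c powr p)"
    using p_pos ext_dist_nonneg[OF pseudometric_X c_nonneg] ext_dist_Orig_le[OF dX_le]
    by (intro sum_mono powr_mono2) auto
  also have "\<dots> \<le> m * (C1 powr p - CY powr p / 2)"
    using penalty by (simp add: mult_left_mono)
  finally show ?thesis .
qed

lemma edge_sum_le:
  "(\<Sum>i\<in>{1..m}. \<Sum>i'\<in>{1..m}.
      ext_dist dY CY (Orig (e i i')) (ext_edges y0 n f (\<pi> i) (\<pi> i')) powr p)
    \<le> m * (real m - 1) * CY powr p"
proof -
  have "(\<Sum>i\<in>{1..m}. \<Sum>i'\<in>{1..m}.
      ext_dist dY CY (Orig (e i i')) (ext_edges y0 n f (\<pi> i) (\<pi> i')) powr p)
      \<le> (\<Sum>i\<in>{1..m}. \<Sum>i'\<in>{1..m}. (if i = i' then 0 else CY) powr p)"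
    using p_pos ext_dist_nonneg[OF pseudometric_Y CY_nonneg]
    by (intro sum_mono powr_mono2 ext_edge_dist_le) auto
  also have "\<dots> = (\<Sum>i\<in>{1..m}. (real m - 1) * CY powr p)"
  proof (intro sum.cong refl)
    fix i assume "i \<in> {1..m}"
    then show "(\<Sum>i'\<in>{1..m}. (if i = i' then 0 else CY) powr p) = (real m - 1) * CY powr p"
      using sum_off_diagonal_const[of "{1..m}" i "CY powr p"]
      by (simp add: if_distrib[of "\<lambda>x. x powr p"] cong: if_cong)
  qed
  finally show ?thesis
    by simp
qed

lemma extended_cost_dominates:
  "real l * gospa1_cost (ext_dist dX c) (ext_dist dY CY) p C1 CY
      m (Orig \<circ> v) (\<lambda>i i'. Orig (e i i')) n (Orig \<circ> w) (\<lambda>i i'. Orig (f i i')) \<sigma>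
   \<le> real n * gospa1_cost (ext_dist dX c) (ext_dist dY CY) p C1 CY
      m (Orig \<circ> v) (\<lambda>i i'. Orig (e i i')) l (ext_vertices n w) (ext_edges y0 n f) \<pi>"
proof -
  define R where "R = (\<Sum>i\<in>{1..m}. ext_dist dX c (Orig (v i)) (ext_vertices n w (\<pi> i)) powr p)"
  define Q where "Q = (\<Sum>i\<in>{1..m}. \<Sum>i'\<in>{1..m}.
    ext_dist dY CY (Orig (e i i')) (ext_edges y0 n f (\<pi> i) (\<pi> i')) powr p)"
  have R_\<sigma>: "(\<Sum>i\<in>{1..m}. ext_dist dX c (Orig (v i)) (Orig (w (\<sigma> i))) powr p) \<le> R"
    unfolding R_def using agree p_pos pseudometric_nonneg[OF pseudometric_X]
    by (intro sum_mono powr_mono2 vertex_dist_le) auto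
  have Q_\<sigma>: "(\<Sum>i\<in>{1..m}. \<Sum>i'\<in>{1..m}.
      ext_dist dY CY (Orig (e i i')) (Orig (f (\<sigma> i) (\<sigma> i'))) powr p) \<le> Q"
    unfolding Q_def using p_pos pseudometric_nonneg[OF pseudometric_Y]
    by (intro sum_mono powr_mono2 edge_dist_le) auto
  have R_le: "R \<le> m * (C1 powr p - CY powr p / 2)"
    unfolding R_def by (rule vertex_sum_le)
  have Q_le: "Q \<le> m * (real m - 1) * CY powr p"
    unfolding Q_def by (rule edge_sum_le)
  have "real l * gospa1_cost (ext_dist dX c) (ext_dist dY CY) p C1 CY
      m (Orig \<circ> v) (\<lambda>i i'. Orig (e i i')) n (Orig \<circ> w) (\<lambda>i i'. Orig (f i i')) \<sigma>
    \<le> real l * cost_of_sums m n (C1 powr p) (CY powr p) R Q"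
    unfolding gospa1_cost_eq_cost_of_sums using sizes R_\<sigma> Q_\<sigma>
    by (intro mult_left_mono cost_of_sums_mono) auto
  also have "\<dots> \<le> real n * cost_of_sums m l (C1 powr p) (CY powr p) R Q"
    using sizes R_le Q_le unfolding R_def Q_def
    by (intro cost_of_sums_scaled_le) (auto intro!: sum_nonneg)
  also have "\<dots> = real n * gospa1_cost (ext_dist dX c) (ext_dist dY CY) p C1 CY
      m (Orig \<circ> v) (\<lambda>i i'. Orig (e i i')) l (ext_vertices n w) (ext_edges y0 n f) \<pi>"
    unfolding gospa1_cost_eq_cost_of_sums R_def Q_def by simp
  finally show ?thesis .
qed

end

end

lemma le_powr_inverse_of_powr_le:
  fixes x y p :: real
  assumes "0 \<le> x" "0 < p" "x powr p \<le> y"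
  shows "x \<le> y powr (1 / p)"
proof -
  have "x = (x powr p) powr (1 / p)"
    using assms(1,2) by (simp add: powr_powr)
  also have "\<dots> \<le> y powr (1 / p)"
    using assms by (intro powr_mono2) auto
  finally show ?thesis .
qed

theorem lemmaB:
  fixes dX :: "'x \<Rightarrow> 'x \<Rightarrow> real" and dY :: "'y \<Rightarrow> 'y \<Rightarrow> real"
    and y0 :: 'y and p CX CY C1 :: real and m n l :: nat
    and v w :: "nat \<Rightarrow> 'x" and e f :: "nat \<Rightarrow> nat \<Rightarrow> 'y"
  assumes "pseudometric dX" and "pseudometric dY"
    and "\<forall>x x'. dX x x' \<le> CX" and "\<forall>y y'. dY y y' \<le> CY"
    and "p \<ge> 1" and "C1 \<ge> 0"
    and "C1 powr p \<ge> CX powr p + CY powr p / 2"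
    and "m \<le> n" and "n \<le> l" and "n \<ge> 1"
    and "is_graph y0 m e" and "is_graph y0 n f"
  shows "gospa1 (ext_dist dX ((C1 powr p - CY powr p / 2) powr (1 / p))) (ext_dist dY CY) p C1 CY
            m (Orig \<circ> v) (\<lambda>i i'. Orig (e i i')) n (Orig \<circ> w) (\<lambda>i i'. Orig (f i i'))
         \<le> gospa1 (ext_dist dX ((C1 powr p - CY powr p / 2) powr (1 / p))) (ext_dist dY CY) p C1 CY
            m (Orig \<circ> v) (\<lambda>i i'. Orig (e i i')) l (ext_vertices n w) (ext_edges y0 n f)"
proof -
  define c where "c = (C1 powr p - CY powr p / 2) powr (1 / p)"
  have "0 \<le> CX"
    using order_trans[OF pseudometric_nonneg[OF assms(1)] assms(3)[rule_format]] .
  moreover have CX_le: "CX powr p \<le> C1 powr p - CY powr p / 2"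
    using assms(7) by simp
  ultimately have "CX \<le> c"
    unfolding c_def using assms(5) by (intro le_powr_inverse_of_powr_le) auto
  moreover have "c powr p = C1 powr p - CY powr p / 2"
    unfolding c_def using assms(5) CX_le order_trans[OF powr_ge_zero CX_le] by (simp add: powr_powr)
  ultimately interpret gospa1_padding dX dY c CY C1 p y0 m n l v w e f
    using assms by unfold_locales (auto intro: order_trans[OF _ \<open>CX \<le> c\<close>])
  show ?thesis
    unfolding c_def[symmetric]
  proof (rule gospa1_le_gospa1I, goal_cases)
    case (4 \<pi>)
    then obtain \<sigma> where "\<sigma> permutes {1..n}"
      and "\<And>i. i \<in> {1..m} \<Longrightarrow> \<pi> i \<le> n \<Longrightarrow> \<sigma> i = \<pi> i"
      using permutes_interval_agreeing assms(8,9) by metis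
    then show ?case
      using extended_cost_dominates[OF 4] by blast
  qed (use assms(5,9,10) in auto)
qed

end
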